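(* Let $1 \le s \le r$ be fixed integers, let $\alpha \in (0,1)$ be fixed, and let $n \ge r$. Let $H_1, H_2, \ldots$ be independent, each uniformly distributed over the $r$-element subsets of $[n] = \{1, \ldots, n\}$. An $s$-element subset $S \subseteq [n]$ is said to be collected by time $k$ if $S \subseteq H_t$ for some $t \le k$. Let $T^{(r,s)}_\alpha$ be the smallest $k$ such that at least $(1-\alpha)\binom{n}{s}$ distinct $s$-element subsets of $[n]$ have been collected by time $k$. Then, as $n \to \infty$, \[ \mathbb{E}\, T^{(r,s)}_\alpha = \frac{\binom{n}{s}\log\left(\frac{1}{\alpha}\right)}{\binom{r}{s}}\,(1+o(1)). \]
   Context: In each round $t$ one draws $r$ distinct coupons uniformly at random (without replacement) from $[n]$, independently across rounds; all $s$-subsets of the drawn $r$-set are marked as collected. *)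

theory Defs
  imports "HOL-Probability.Probability"
begin

definition round_pmf :: "nat \<Rightarrow> nat \<Rightarrow> nat set pmf" where
  "round_pmf n r = pmf_of_set {H. H \<subseteq> {1..n} \<and> card H = r}"

text \<open>The probability space of the i.i.d. sequence H_1, H_2, ... (stream index t
  corresponds to round t+1).\<close>
definition rounds_space :: "nat \<Rightarrow> nat \<Rightarrow> nat set stream measure" where
  "rounds_space n r = stream_space (measure_pmf (round_pmf n r))"

definition collected :: "nat \<Rightarrow> nat \<Rightarrow> nat set stream \<Rightarrow> nat \<Rightarrow> nat set set" where
  "collected n s \<omega> k = {S. S \<subseteq> {1..n} \<and> card S = s \<and> (\<exists>t<k. S \<subseteq> \<omega> !! t)}"

definition T_alpha :: "nat \<Rightarrow> nat \<Rightarrow> real \<Rightarrow> nat set stream \<Rightarrow> enat" where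
  "T_alpha n s \<alpha> \<omega> =
     (if \<exists>k. real (card (collected n s \<omega> k)) \<ge> (1 - \<alpha>) * real (n choose s)
      then enat (LEAST k. real (card (collected n s \<omega> k)) \<ge> (1 - \<alpha>) * real (n choose s))
      else \<infinity>)"

definition expected_T :: "nat \<Rightarrow> nat \<Rightarrow> nat \<Rightarrow> real \<Rightarrow> ennreal" where
  "expected_T n r s \<alpha> = (\<integral>\<^sup>+ \<omega>. ennreal_of_enat (T_alpha n s \<alpha> \<omega>) \<partial>rounds_space n r)"

end

theory Submission
  imports Defs
begin

text \<open>
  Let \<open>X\<^sub>k\<close> be the number of \<open>s\<close>-sets still uncollected after \<open>k\<close> rounds and \<open>N = (n choose s)\<close>.
  Then \<open>T > k\<close> iff \<open>X\<^sub>k > \<alpha> N\<close>, so \<open>E T = \<Sum>\<^sub>k P(X\<^sub>k > \<alpha> N)\<close>. A fixed \<open>s\<close>-set lies in a random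
  \<open>r\<close>-set with probability \<open>p = (r choose s) / N\<close>, hence \<open>E X\<^sub>k = N (1 - p)\<^sup>k\<close>; and two
  \<open>s\<close>-sets are missed almost independently, which gives
  \<open>Var X\<^sub>k \<le> k (1 - p)\<^bsup>k-1\<^esup> (r choose s)\<^sup>2\<close>, i.e. standard deviation \<open>O(\<surd>N)\<close> on the relevant
  time scale \<open>L = N ln(1/\<alpha>) / (r choose s)\<close>. Since \<open>(1 - p)\<^bsup>cL\<^esup> \<approx> \<alpha>\<^sup>c\<close>, Chebyshev's inequality
  shows that \<open>P(T > k)\<close> is close to 1 for \<open>k \<le> (1 - \<epsilon>) L\<close> and summably small for
  \<open>k \<ge> (1 + \<epsilon>) L\<close>, so \<open>E T = (1 + o(1)) L\<close>.
\<close>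

section \<open>Counting \<open>k\<close>-subsets\<close>

definition ksubsets :: "'a set \<Rightarrow> nat \<Rightarrow> 'a set set" where
  "ksubsets A k = {S. S \<subseteq> A \<and> card S = k}"

lemma finite_ksubsets: "finite A \<Longrightarrow> finite (ksubsets A k)"
  unfolding ksubsets_def by (rule finite_subset[of _ "Pow A"]) auto

lemma card_ksubsets: "finite A \<Longrightarrow> card (ksubsets A k) = card A choose k"
  unfolding ksubsets_def by (rule n_subsets)

lemma Collect_ksubsets_subset: "H \<subseteq> A \<Longrightarrow> {S \<in> ksubsets A s. S \<subseteq> H} = ksubsets H s"
  unfolding ksubsets_def by auto

lemma card_ksubsets_supersets:
  assumes A: "finite A" and S: "S \<subseteq> A" and Sk: "card S \<le> k"
  shows "card {H \<in> ksubsets A k. S \<subseteq> H} = (card A - card S) choose (k - card S)"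
proof -
  have fin: "finite S" using A S by (rule rev_finite_subset)
  have "bij_betw (\<lambda>K. K \<union> S) (ksubsets (A - S) (k - card S)) {H \<in> ksubsets A k. S \<subseteq> H}"
  proof (rule bij_betw_byWitness[where f' = "\<lambda>H. H - S"])
    show "(\<lambda>K. K \<union> S) ` ksubsets (A - S) (k - card S) \<subseteq> {H \<in> ksubsets A k. S \<subseteq> H}"
    proof (intro image_subsetI CollectI conjI)
      fix K assume "K \<in> ksubsets (A - S) (k - card S)"
      then have K: "K \<subseteq> A - S" "card K = k - card S" by (auto simp: ksubsets_def)
      then have "card (K \<union> S) = k"
        using A Sk fin by (subst card_Un_disjoint) (auto intro: finite_subset)
      then show "K \<union> S \<in> ksubsets A k" using K S by (auto simp: ksubsets_def)
    qed auto
    show "(\<lambda>H. H - S) ` {H \<in> ksubsets A k. S \<subseteq> H} \<subseteq> ksubsets (A - S) (k - card S)"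
      using fin by (auto simp: ksubsets_def card_Diff_subset)
  qed (auto simp: ksubsets_def)
  then have "card {H \<in> ksubsets A k. S \<subseteq> H} = card (ksubsets (A - S) (k - card S))"
    by (simp add: bij_betw_same_card)
  also have "\<dots> = (card A - card S) choose (k - card S)"
    using A S fin by (simp add: card_ksubsets card_Diff_subset)
  finally show ?thesis .
qed

lemma power_diff_le:
  fixes a c :: "'a :: linordered_idom"
  assumes "0 \<le> c" "c \<le> a"
  shows "a ^ k - c ^ k \<le> of_nat k * (a - c) * a ^ (k - 1)"
proof (induction k)
  case (Suc k)
  have "a ^ Suc k - c ^ Suc k = a * (a ^ k - c ^ k) + c ^ k * (a - c)"
    by (simp add: algebra_simps)
  also have "\<dots> \<le> a * (of_nat k * (a - c) * a ^ (k - 1)) + a ^ k * (a - c)"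
    using Suc assms by (intro add_mono mult_left_mono mult_right_mono power_mono) auto
  also have "\<dots> = of_nat (Suc k) * (a - c) * a ^ (Suc k - 1)"
    by (cases k) (simp_all add: algebra_simps)
  finally show ?case .
qed simp

lemma power_le_power_add:
  fixes a b c q :: "'a :: linordered_idom"
  assumes "0 \<le> c" "0 \<le> b" "0 \<le> a" "a \<le> q" "a \<le> c + b"
  shows "a ^ k \<le> c ^ k + of_nat k * q ^ (k - 1) * b"
proof (cases "c \<le> a")
  case True
  have "a ^ k - c ^ k \<le> of_nat k * (a - c) * a ^ (k - 1)"
    using power_diff_le[OF assms(1) True] .
  also have "\<dots> \<le> of_nat k * b * q ^ (k - 1)"
    using assms True by (intro mult_mono power_mono) auto
  finally show ?thesis
    by (simp add: algebra_simps)
next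
  case False
  then have "a ^ k \<le> c ^ k"
    using assms by (intro power_mono) auto
  moreover have "0 \<le> of_nat k * q ^ (k - 1) * b"
    using assms by simp
  ultimately show ?thesis
    by linarith
qed

lemma one_minus_power_le_exp:
  fixes p :: real
  assumes "p \<le> 1"
  shows "(1 - p) ^ k \<le> exp (- real k * p)"
proof -
  have "(1 - p) ^ k \<le> exp (- p) ^ k"
    using assms exp_ge_add_one_self[of "- p"] by (intro power_mono) auto
  also have "exp (- p) ^ k = exp (- real k * p)"
    by (simp add: exp_of_nat_mult[symmetric])
  finally show ?thesis .
qed

lemma exp_le_one_minus_power:
  fixes p :: real
  assumes "0 \<le> p" "p \<le> 1 / 2"
  shows "exp (- real k * (p * (1 + 2 * p))) \<le> (1 - p) ^ k"
proof -
  have "- real k * (p * (1 + 2 * p)) \<le> real k * ln (1 - p)"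
    using mult_left_mono[OF ln_one_minus_pos_lower_bound[OF assms], of "real k"]
    by (simp add: power2_eq_square algebra_simps)
  then have "exp (- real k * (p * (1 + 2 * p))) \<le> exp (real k * ln (1 - p))"
    by simp
  also have "\<dots> = (1 - p) ^ k"
    using assms by (simp add: exp_of_nat_mult)
  finally show ?thesis .
qed

lemma enat_less_Least_iff:
  assumes mono: "\<And>j k. P j \<Longrightarrow> j \<le> k \<Longrightarrow> P k"
  shows "enat k < (if \<exists>k. P k then enat (LEAST k. P k) else \<infinity>) \<longleftrightarrow> \<not> P k"
proof (cases "\<exists>k. P k")
  case True
  then show ?thesis
    using mono[of "LEAST k. P k" k] LeastI_ex[OF True] not_less_Least[of k P] by force
qed simp

section \<open>The rounds and the uncollected count\<close>

lemma (in prob_space) emeasure_stream_space_prefix: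
  assumes [measurable]: "Measurable.pred M Q"
  shows "emeasure (stream_space M) {\<omega> \<in> space (stream_space M). \<forall>t<k. Q (\<omega> !! t)}
       = emeasure M {x \<in> space M. Q x} ^ k"
proof (induction k)
  case 0
  then show ?case
    using prob_space.emeasure_space_1[OF prob_space_stream_space] by simp
next
  case (Suc k)
  let ?S = "stream_space M"
  have step: "(\<forall>t<Suc k. Q ((x ## \<omega>) !! t)) \<longleftrightarrow> Q x \<and> (\<forall>t<k. Q (\<omega> !! t))" for x \<omega>
    by (auto simp: less_Suc_eq_0_disj)
  have "emeasure ?S {\<omega> \<in> space ?S. \<forall>t<Suc k. Q (\<omega> !! t)}
      = (\<integral>\<^sup>+x. indicator {x \<in> space M. Q x} x * emeasure ?S {\<omega> \<in> space ?S. \<forall>t<k. Q (\<omega> !! t)} \<partial>M)"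
    by (subst emeasure_stream_space, measurable)
       (auto intro!: nn_integral_cong simp: space_stream_space streams_Stream step split: split_indicator)
  also have "\<dots> = emeasure M {x \<in> space M. Q x} * emeasure M {x \<in> space M. Q x} ^ k"
    by (simp add: nn_integral_multc Suc)
  finally show ?case
    by simp
qed

interpretation rounds: prob_space "rounds_space n r" for n r
  unfolding rounds_space_def by (rule prob_space.prob_space_stream_space[OF prob_space_measure_pmf])

lemma space_rounds_space: "space (rounds_space n r) = UNIV"
  by (simp add: rounds_space_def space_stream_space)

lemma sets_rounds_space_Collect:
  "Measurable.pred (rounds_space n r) P \<Longrightarrow> {\<omega>. P \<omega>} \<in> sets (rounds_space n r)"
  by (simp add: pred_def space_rounds_space)

lemma measure_rounds_space_prefix:
  "measure (rounds_space n r) {\<omega>. \<forall>t<k. Q (\<omega> !! t)} = measure_pmf.prob (round_pmf n r) {H. Q H} ^ k"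
proof -
  have "emeasure (rounds_space n r) {\<omega>. \<forall>t<k. Q (\<omega> !! t)}
      = ennreal (measure_pmf.prob (round_pmf n r) {H. Q H} ^ k)"
    using prob_space.emeasure_stream_space_prefix[OF prob_space_measure_pmf, where Q = Q and k = k]
    by (simp add: rounds_space_def space_stream_space measure_pmf.emeasure_eq_measure ennreal_power)
  then show ?thesis
    by (simp add: measure_def)
qed

lemma round_pmf_eq: "round_pmf n r = pmf_of_set (ksubsets {1..n} r)"
  unfolding round_pmf_def ksubsets_def ..

lemma measure_round_pmf:
  assumes "r \<le> n"
  shows "measure_pmf.prob (round_pmf n r) A = (\<Sum>H\<in>ksubsets {1..n} r. of_bool (H \<in> A)) / real (n choose r)"
proof -
  have "ksubsets {1..n} r \<noteq> {}"
    using assms card_ksubsets[of "{1..n}" r] by (auto simp: zero_less_binomial_iff)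
  then show ?thesis
    by (simp add: round_pmf_eq measure_pmf_of_set finite_ksubsets card_ksubsets Int_def)
qed

definition missed :: "nat \<Rightarrow> nat set \<Rightarrow> nat set stream set" where
  "missed k S = {\<omega>. \<forall>t<k. \<not> S \<subseteq> \<omega> !! t}"

definition uncollected_count :: "nat \<Rightarrow> nat \<Rightarrow> nat \<Rightarrow> nat set stream \<Rightarrow> real" where
  "uncollected_count n s k \<omega> = (\<Sum>S\<in>ksubsets {1..n} s. indicator (missed k S) \<omega>)"

lemma sets_missed [measurable]: "missed k S \<in> sets (rounds_space n r)"
proof -
  have "missed k S = {\<omega> \<in> space (rounds_space n r). \<forall>t<k. \<not> S \<subseteq> \<omega> !! t}"
    by (simp add: missed_def space_rounds_space)
  also have "\<dots> \<in> sets (rounds_space n r)"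
    unfolding rounds_space_def by measurable
  finally show ?thesis .
qed

lemma prob_missed_both:
  "rounds.prob n r (missed k S \<inter> missed k S')
     = measure_pmf.prob (round_pmf n r) {H. \<not> S \<subseteq> H \<and> \<not> S' \<subseteq> H} ^ k"
proof -
  have "missed k S \<inter> missed k S' = {\<omega>. \<forall>t<k. \<not> S \<subseteq> \<omega> !! t \<and> \<not> S' \<subseteq> \<omega> !! t}"
    by (auto simp: missed_def)
  then show ?thesis
    using measure_rounds_space_prefix[where Q = "\<lambda>H. \<not> S \<subseteq> H \<and> \<not> S' \<subseteq> H"] by simp
qed

lemma borel_measurable_uncollected_count [measurable]:
  "uncollected_count n s k \<in> borel_measurable (rounds_space n r)"
  unfolding uncollected_count_def by measurable

lemma collected_eq: "collected n s \<omega> k = {S \<in> ksubsets {1..n} s. \<omega> \<notin> missed k S}"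
  unfolding collected_def ksubsets_def missed_def by blast

lemma card_collected:
  "real (card (collected n s \<omega> k)) = real (n choose s) - uncollected_count n s k \<omega>"
proof -
  let ?K = "ksubsets {1..n} s"
  have "card (collected n s \<omega> k) + card {S \<in> ?K. \<omega> \<in> missed k S} = card ?K"
    unfolding collected_eq
    by (subst card_Un_disjoint[symmetric]) (auto simp: finite_ksubsets intro: arg_cong[where f = card])
  moreover have "uncollected_count n s k \<omega> = real (card {S \<in> ?K. \<omega> \<in> missed k S})"
    by (simp add: uncollected_count_def indicator_def finite_ksubsets Int_def)
  ultimately show ?thesis
    by (simp add: card_ksubsets flip: of_nat_add)
qed

lemma collected_mono: "j \<le> k \<Longrightarrow> collected n s \<omega> j \<subseteq> collected n s \<omega> k"
  unfolding collected_def by (auto intro: less_le_trans)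

lemma enat_less_T_alpha_iff:
  "enat k < T_alpha n s \<alpha> \<omega> \<longleftrightarrow> \<alpha> * real (n choose s) < uncollected_count n s k \<omega>"
proof -
  have "enat k < T_alpha n s \<alpha> \<omega> \<longleftrightarrow> \<not> (1 - \<alpha>) * real (n choose s) \<le> real (card (collected n s \<omega> k))"
    unfolding T_alpha_def
  proof (rule enat_less_Least_iff)
    fix i j assume "(1 - \<alpha>) * real (n choose s) \<le> real (card (collected n s \<omega> i))" "i \<le> j"
    moreover have "card (collected n s \<omega> i) \<le> card (collected n s \<omega> j)"
      using collected_mono[OF \<open>i \<le> j\<close>] finite_ksubsets[of "{1..n}" s]
      by (intro card_mono) (auto simp: collected_eq intro: finite_subset)
    ultimately show "(1 - \<alpha>) * real (n choose s) \<le> real (card (collected n s \<omega> j))"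
      by linarith
  qed
  then show ?thesis
    by (simp add: card_collected algebra_simps not_le)
qed

lemma measurable_T_alpha: "T_alpha n s \<alpha> \<in> measurable (rounds_space n r) (count_space UNIV)"
  unfolding T_alpha_def card_collected by measurable

lemma expected_T_eq_suminf:
  "expected_T n r s \<alpha> = (\<Sum>k. ennreal (rounds.prob n r {\<omega>. enat k < T_alpha n s \<alpha> \<omega>}))"
  unfolding expected_T_def nn_integral_enat_function[OF measurable_T_alpha]
  by (simp add: space_rounds_space rounds.emeasure_eq_measure)

lemma uncollected_count_sq:
  "(uncollected_count n s k \<omega>)\<^sup>2
     = (\<Sum>S\<in>ksubsets {1..n} s. \<Sum>S'\<in>ksubsets {1..n} s. indicator (missed k S \<inter> missed k S') \<omega>)"
  unfolding uncollected_count_def power2_eq_square sum_product by (simp add: indicator_inter_arith)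

lemma integrable_uncollected_count: "integrable (rounds_space n r) (uncollected_count n s k)"
  unfolding uncollected_count_def by (simp add: rounds.emeasure_eq_measure)

lemma integrable_uncollected_count_sq:
  "integrable (rounds_space n r) (\<lambda>\<omega>. (uncollected_count n s k \<omega>)\<^sup>2)"
  unfolding uncollected_count_sq by (simp add: rounds.emeasure_eq_measure)

lemma expectation_uncollected_count_sq:
  "rounds.expectation n r (\<lambda>\<omega>. (uncollected_count n s k \<omega>)\<^sup>2)
     = (\<Sum>S\<in>ksubsets {1..n} s. \<Sum>S'\<in>ksubsets {1..n} s. rounds.prob n r (missed k S \<inter> missed k S'))"
  unfolding uncollected_count_sq by (simp add: rounds.emeasure_eq_measure)

section \<open>Moments of the uncollected count and tail bounds for \<open>T_alpha\<close>\<close>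

definition cover_prob :: "nat \<Rightarrow> nat \<Rightarrow> nat \<Rightarrow> real" where
  "cover_prob n r s = real (r choose s) / real (n choose s)"

definition main_term :: "nat \<Rightarrow> nat \<Rightarrow> nat \<Rightarrow> real \<Rightarrow> real" where
  "main_term n r s \<alpha> = real (n choose s) * ln (1 / \<alpha>) / real (r choose s)"

context
  fixes n r s :: nat
  assumes s_le_r: "s \<le> r" and r_le_n: "r \<le> n"
begin

lemma cover_prob_pos: "0 < cover_prob n r s"
  using s_le_r r_le_n by (simp add: cover_prob_def)

lemma prob_round_supset:
  assumes S: "S \<in> ksubsets {1..n} s"
  shows "measure_pmf.prob (round_pmf n r) {H. S \<subseteq> H} = cover_prob n r s"
proof -
  have "card {H \<in> ksubsets {1..n} r. S \<subseteq> H} = (n - s) choose (r - s)"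
    using S s_le_r card_ksubsets_supersets[of "{1..n}" S r] by (simp add: ksubsets_def)
  then have "measure_pmf.prob (round_pmf n r) {H. S \<subseteq> H} = real ((n - s) choose (r - s)) / real (n choose r)"
    using r_le_n by (simp add: measure_round_pmf finite_ksubsets Int_def)
  also have "\<dots> = cover_prob n r s"
    using choose_mult[OF s_le_r r_le_n] s_le_r r_le_n
    by (simp add: cover_prob_def field_simps flip: of_nat_mult)
  finally show ?thesis .
qed

lemma cover_prob_le_1: "cover_prob n r s \<le> 1"
proof -
  have "{1..s} \<in> ksubsets {1..n} s"
    using s_le_r r_le_n by (simp add: ksubsets_def)
  then show ?thesis
    using prob_round_supset measure_pmf.prob_le_1 by metis
qed

lemma prob_round_not_supset:
  "S \<in> ksubsets {1..n} s \<Longrightarrow> measure_pmf.prob (round_pmf n r) {H. \<not> S \<subseteq> H} = 1 - cover_prob n r s"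
  using measure_pmf.prob_compl[of "{H. S \<subseteq> H}" "round_pmf n r"]
  by (simp add: prob_round_supset Compl_eq_Diff_UNIV[symmetric] Collect_neg_eq)

lemma prob_round_not_supset_both:
  assumes "S \<in> ksubsets {1..n} s" "S' \<in> ksubsets {1..n} s"
  shows "measure_pmf.prob (round_pmf n r) {H. \<not> S \<subseteq> H \<and> \<not> S' \<subseteq> H}
       = 1 - 2 * cover_prob n r s + measure_pmf.prob (round_pmf n r) {H. S \<subseteq> H \<and> S' \<subseteq> H}"
proof -
  let ?P = "measure_pmf.prob (round_pmf n r)"
  have "{H. \<not> S \<subseteq> H \<and> \<not> S' \<subseteq> H} = UNIV - ({H. S \<subseteq> H} \<union> {H. S' \<subseteq> H})"
    by auto
  then have "?P {H. \<not> S \<subseteq> H \<and> \<not> S' \<subseteq> H} = 1 - ?P ({H. S \<subseteq> H} \<union> {H. S' \<subseteq> H})"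
    using measure_pmf.prob_compl by simp
  also have "?P ({H. S \<subseteq> H} \<union> {H. S' \<subseteq> H})
      = ?P {H. S \<subseteq> H} + ?P {H. S' \<subseteq> H} - ?P {H. S \<subseteq> H \<and> S' \<subseteq> H}"
    by (subst measure_Un3) (auto simp: measure_pmf.fmeasurable_eq_sets Collect_conj_eq)
  finally show ?thesis
    using assms by (simp add: prob_round_supset)
qed

lemma sum_prob_round_supset_both:
  "(\<Sum>S\<in>ksubsets {1..n} s. \<Sum>S'\<in>ksubsets {1..n} s.
      measure_pmf.prob (round_pmf n r) {H. S \<subseteq> H \<and> S' \<subseteq> H}) = real (r choose s) ^ 2"
proof -
  let ?Ks = "ksubsets {1..n} s" and ?Kr = "ksubsets {1..n} r"
  let ?c = "\<lambda>H S. of_bool (S \<subseteq> H) :: real"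
  have count: "(\<Sum>S\<in>?Ks. ?c H S) = real (r choose s)" if "H \<in> ?Kr" for H
  proof -
    have H: "H \<subseteq> {1..n}" "finite H" "card H = r"
      using that by (auto simp: ksubsets_def intro: finite_subset)
    then have "?Ks \<inter> {S. S \<subseteq> H} = ksubsets H s"
      using Collect_ksubsets_subset[OF H(1)] by auto
    with H show ?thesis
      by (simp add: finite_ksubsets card_ksubsets)
  qed
  have "(\<Sum>S\<in>?Ks. \<Sum>S'\<in>?Ks. measure_pmf.prob (round_pmf n r) {H. S \<subseteq> H \<and> S' \<subseteq> H})
      = (\<Sum>S\<in>?Ks. \<Sum>S'\<in>?Ks. \<Sum>H\<in>?Kr. ?c H S * ?c H S') / real (n choose r)"
    using r_le_n by (simp add: measure_round_pmf sum_divide_distrib of_bool_conj)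
  also have "(\<Sum>S\<in>?Ks. \<Sum>S'\<in>?Ks. \<Sum>H\<in>?Kr. ?c H S * ?c H S')
      = (\<Sum>H\<in>?Kr. \<Sum>S\<in>?Ks. \<Sum>S'\<in>?Ks. ?c H S * ?c H S')"
    by (rule trans[OF sum.cong[OF refl sum.swap] sum.swap])
  also have "\<dots> = (\<Sum>H\<in>?Kr. (\<Sum>S\<in>?Ks. ?c H S) * (\<Sum>S'\<in>?Ks. ?c H S'))"
    by (simp add: sum_product)
  also have "\<dots> = (\<Sum>H\<in>?Kr. real (r choose s) ^ 2)"
    by (rule sum.cong[OF refl]) (simp only: count power2_eq_square)
  also have "\<dots> / real (n choose r) = real (r choose s) ^ 2"
    using r_le_n by (simp add: card_ksubsets)
  finally show ?thesis .
qed

lemma prob_missed: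
  "S \<in> ksubsets {1..n} s \<Longrightarrow> rounds.prob n r (missed k S) = (1 - cover_prob n r s) ^ k"
  using measure_rounds_space_prefix[where Q = "\<lambda>H. \<not> S \<subseteq> H"]
  by (simp add: missed_def prob_round_not_supset)

lemma prob_missed_Int_le:
  assumes S: "S \<in> ksubsets {1..n} s" and S': "S' \<in> ksubsets {1..n} s"
  shows "rounds.prob n r (missed k S \<inter> missed k S')
    \<le> ((1 - cover_prob n r s) ^ k)\<^sup>2
       + real k * (1 - cover_prob n r s) ^ (k - 1) * measure_pmf.prob (round_pmf n r) {H. S \<subseteq> H \<and> S' \<subseteq> H}"
proof -
  let ?P = "measure_pmf.prob (round_pmf n r)" and ?q = "1 - cover_prob n r s"
  have "?P {H. \<not> S \<subseteq> H \<and> \<not> S' \<subseteq> H} \<le> ?P {H. \<not> S \<subseteq> H}"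
    by (rule measure_pmf.finite_measure_mono) auto
  then have "?P {H. \<not> S \<subseteq> H \<and> \<not> S' \<subseteq> H} \<le> ?q"
    using S by (simp add: prob_round_not_supset)
  moreover have "?P {H. \<not> S \<subseteq> H \<and> \<not> S' \<subseteq> H} \<le> ?q\<^sup>2 + ?P {H. S \<subseteq> H \<and> S' \<subseteq> H}"
    using prob_round_not_supset_both[OF S S'] cover_prob_pos
    by (simp add: power2_eq_square algebra_simps)
  ultimately have "?P {H. \<not> S \<subseteq> H \<and> \<not> S' \<subseteq> H} ^ k
      \<le> (?q\<^sup>2) ^ k + real k * ?q ^ (k - 1) * ?P {H. S \<subseteq> H \<and> S' \<subseteq> H}"
    by (intro power_le_power_add) auto
  then show ?thesis
    by (simp add: prob_missed_both power2_eq_square power_mult_distrib)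
qed

lemma expectation_uncollected_count:
  "rounds.expectation n r (uncollected_count n s k) = real (n choose s) * (1 - cover_prob n r s) ^ k"
  unfolding uncollected_count_def
  by (simp add: rounds.emeasure_eq_measure prob_missed finite_ksubsets card_ksubsets)

lemma variance_uncollected_count_le:
  "rounds.variance n r (uncollected_count n s k) \<le> real k * (1 - cover_prob n r s) ^ (k - 1) * real (r choose s) ^ 2"
proof -
  let ?K = "ksubsets {1..n} s" and ?q = "1 - cover_prob n r s"
  let ?b = "\<lambda>S S'. measure_pmf.prob (round_pmf n r) {H. S \<subseteq> H \<and> S' \<subseteq> H}"
  have "rounds.variance n r (uncollected_count n s k)
      = (\<Sum>S\<in>?K. \<Sum>S'\<in>?K. rounds.prob n r (missed k S \<inter> missed k S')) - (real (n choose s) * ?q ^ k)\<^sup>2"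
    by (subst rounds.variance_eq)
       (simp_all add: integrable_uncollected_count integrable_uncollected_count_sq
         expectation_uncollected_count expectation_uncollected_count_sq)
  also have "(real (n choose s) * ?q ^ k)\<^sup>2 = (\<Sum>S\<in>?K. \<Sum>S'\<in>?K. (?q ^ k)\<^sup>2)"
    by (simp add: finite_ksubsets card_ksubsets power2_eq_square)
  also have "(\<Sum>S\<in>?K. \<Sum>S'\<in>?K. rounds.prob n r (missed k S \<inter> missed k S')) - \<dots>
      = (\<Sum>S\<in>?K. \<Sum>S'\<in>?K. rounds.prob n r (missed k S \<inter> missed k S') - (?q ^ k)\<^sup>2)"
    by (simp add: sum_subtractf)
  also have "\<dots> \<le> (\<Sum>S\<in>?K. \<Sum>S'\<in>?K. real k * ?q ^ (k - 1) * ?b S S')"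
    using prob_missed_Int_le by (intro sum_mono) (simp add: diff_le_eq add.commute)
  also have "\<dots> = real k * ?q ^ (k - 1) * real (r choose s) ^ 2"
    by (simp only: sum_distrib_left[symmetric] sum_prob_round_supset_both)
  finally show ?thesis .
qed

lemma prob_uncollected_count_deviation_le:
  assumes "0 < d"
  shows "rounds.prob n r {\<omega>. d \<le> \<bar>uncollected_count n s k \<omega> - real (n choose s) * (1 - cover_prob n r s) ^ k\<bar>}
    \<le> real k * (1 - cover_prob n r s) ^ (k - 1) * real (r choose s) ^ 2 / d\<^sup>2"
proof -
  have "rounds.prob n r {\<omega>. d \<le> \<bar>uncollected_count n s k \<omega> - real (n choose s) * (1 - cover_prob n r s) ^ k\<bar>}
      \<le> rounds.variance n r (uncollected_count n s k) / d\<^sup>2"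
    using rounds.Chebyshev_inequality[OF borel_measurable_uncollected_count
        integrable_uncollected_count_sq[where n = n and r = r and s = s and k = k] assms]
    by (simp add: expectation_uncollected_count space_rounds_space)
  also have "\<dots> \<le> real k * (1 - cover_prob n r s) ^ (k - 1) * real (r choose s) ^ 2 / d\<^sup>2"
    by (intro divide_right_mono variance_uncollected_count_le) simp
  finally show ?thesis .
qed

lemma prob_T_alpha_tail_le:
  assumes "(1 - cover_prob n r s) ^ k \<le> \<beta>" "\<beta> < \<alpha>"
  shows "rounds.prob n r {\<omega>. enat k < T_alpha n s \<alpha> \<omega>}
    \<le> real k * (1 - cover_prob n r s) ^ (k - 1) * real (r choose s) ^ 2 / ((\<alpha> - \<beta>) * real (n choose s))\<^sup>2"
proof -
  let ?N = "real (n choose s)" and ?q = "1 - cover_prob n r s"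
  have N: "0 < ?N"
    using s_le_r r_le_n by simp
  have "?N * ?q ^ k \<le> \<beta> * ?N"
    using assms N by simp
  then have "{\<omega>. \<alpha> * ?N < uncollected_count n s k \<omega>}
      \<subseteq> {\<omega>. (\<alpha> - \<beta>) * ?N \<le> \<bar>uncollected_count n s k \<omega> - ?N * ?q ^ k\<bar>}"
    by (auto simp: algebra_simps)
  then have "rounds.prob n r {\<omega>. enat k < T_alpha n s \<alpha> \<omega>}
      \<le> rounds.prob n r {\<omega>. (\<alpha> - \<beta>) * ?N \<le> \<bar>uncollected_count n s k \<omega> - ?N * ?q ^ k\<bar>}"
    unfolding enat_less_T_alpha_iff by (rule rounds.finite_measure_mono[OF _ sets_rounds_space_Collect]) measurable
  also have "\<dots> \<le> real k * ?q ^ (k - 1) * real (r choose s) ^ 2 / ((\<alpha> - \<beta>) * ?N)\<^sup>2"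
    using assms N by (intro prob_uncollected_count_deviation_le) simp
  finally show ?thesis .
qed

lemma prob_T_alpha_tail_ge:
  assumes "\<alpha> < \<beta>" "\<beta> \<le> (1 - cover_prob n r s) ^ k"
  shows "1 - real k * real (r choose s) ^ 2 / ((\<beta> - \<alpha>) * real (n choose s))\<^sup>2
    \<le> rounds.prob n r {\<omega>. enat k < T_alpha n s \<alpha> \<omega>}"
proof -
  let ?N = "real (n choose s)" and ?q = "1 - cover_prob n r s"
  let ?A = "{\<omega>. \<alpha> * ?N < uncollected_count n s k \<omega>}"
  have N: "0 < ?N"
    using s_le_r r_le_n by simp
  have "\<beta> * ?N \<le> ?N * ?q ^ k"
    using assms N by simp
  then have "UNIV - ?A \<subseteq> {\<omega>. (\<beta> - \<alpha>) * ?N \<le> \<bar>uncollected_count n s k \<omega> - ?N * ?q ^ k\<bar>}"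
    by (auto simp: algebra_simps)
  then have "rounds.prob n r (UNIV - ?A)
      \<le> rounds.prob n r {\<omega>. (\<beta> - \<alpha>) * ?N \<le> \<bar>uncollected_count n s k \<omega> - ?N * ?q ^ k\<bar>}"
    by (rule rounds.finite_measure_mono[OF _ sets_rounds_space_Collect]) measurable
  also have "\<dots> \<le> real k * ?q ^ (k - 1) * real (r choose s) ^ 2 / ((\<beta> - \<alpha>) * ?N)\<^sup>2"
    using assms N by (intro prob_uncollected_count_deviation_le) simp
  also have "\<dots> \<le> real k * real (r choose s) ^ 2 / ((\<beta> - \<alpha>) * ?N)\<^sup>2"
    using cover_prob_pos cover_prob_le_1
    by (intro divide_right_mono mult_right_mono mult_left_le power_le_one) auto
  finally have "rounds.prob n r (UNIV - ?A) \<le> real k * real (r choose s) ^ 2 / ((\<beta> - \<alpha>) * ?N)\<^sup>2" .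
  moreover have "?A \<in> sets (rounds_space n r)"
    by (rule sets_rounds_space_Collect) measurable
  ultimately show ?thesis
    using rounds.prob_compl by (simp add: space_rounds_space enat_less_T_alpha_iff)
qed

lemma exp_cover_prob_main_term:
  assumes "0 < \<alpha>"
  shows "exp (- c * (cover_prob n r s * main_term n r s \<alpha>)) = \<alpha> powr c"
proof -
  have "cover_prob n r s * main_term n r s \<alpha> = - ln \<alpha>"
    using s_le_r r_le_n assms by (simp add: cover_prob_def main_term_def ln_div)
  then show ?thesis
    using assms by (simp add: powr_def)
qed

lemma main_term_pos: "0 < \<alpha> \<Longrightarrow> \<alpha> < 1 \<Longrightarrow> 0 < main_term n r s \<alpha>"
  using s_le_r r_le_n by (simp add: main_term_def)

lemma one_minus_cover_prob_power_le:
  assumes "0 < \<alpha>" "c * main_term n r s \<alpha> \<le> real k"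
  shows "(1 - cover_prob n r s) ^ k \<le> \<alpha> powr c"
proof -
  have "(1 - cover_prob n r s) ^ k \<le> exp (- real k * cover_prob n r s)"
    using cover_prob_le_1 by (rule one_minus_power_le_exp)
  also have "\<dots> \<le> exp (- c * (cover_prob n r s * main_term n r s \<alpha>))"
    using mult_right_mono[OF assms(2), of "cover_prob n r s"] cover_prob_pos by (simp add: algebra_simps)
  also have "\<dots> = \<alpha> powr c"
    using assms(1) by (rule exp_cover_prob_main_term)
  finally show ?thesis .
qed

lemma one_minus_cover_prob_power_ge:
  assumes "0 < \<alpha>" "cover_prob n r s \<le> 1 / 2"
    and "real k * (1 + 2 * cover_prob n r s) \<le> c * main_term n r s \<alpha>"
  shows "\<alpha> powr c \<le> (1 - cover_prob n r s) ^ k"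
proof -
  have "\<alpha> powr c = exp (- c * (cover_prob n r s * main_term n r s \<alpha>))"
    using assms(1) by (rule exp_cover_prob_main_term[symmetric])
  also have "\<dots> \<le> exp (- real k * (cover_prob n r s * (1 + 2 * cover_prob n r s)))"
    using mult_right_mono[OF assms(3), of "cover_prob n r s"] cover_prob_pos by (simp add: algebra_simps)
  also have "\<dots> \<le> (1 - cover_prob n r s) ^ k"
    using cover_prob_pos assms(2) by (intro exp_le_one_minus_power) auto
  finally show ?thesis .
qed

lemma expected_T_le:
  assumes \<alpha>: "0 < \<alpha>" "\<alpha> < 1" and \<epsilon>: "0 < \<epsilon>"
  shows "expected_T n r s \<alpha> \<le> ennreal ((1 + \<epsilon>) * main_term n r s \<alpha> + 1 + 1 / (\<alpha> - \<alpha> powr (1 + \<epsilon>))\<^sup>2)"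
proof -
  let ?N = "real (n choose s)" and ?C = "real (r choose s)" and ?p = "cover_prob n r s"
  define \<delta> where "\<delta> = \<alpha> - \<alpha> powr (1 + \<epsilon>)"
  define k1 where "k1 = nat \<lceil>(1 + \<epsilon>) * main_term n r s \<alpha>\<rceil>"
  have \<delta>: "0 < \<delta>"
    using powr_less_mono'[OF \<alpha>, of 1 "1 + \<epsilon>"] \<epsilon> \<alpha> by (simp add: \<delta>_def)
  define g where "g k = of_bool (k < k1) + real k * (1 - ?p) ^ (k - 1) * (?C\<^sup>2 / (\<delta> * ?N)\<^sup>2)" for k
  have tail_le_g: "rounds.prob n r {\<omega>. enat k < T_alpha n s \<alpha> \<omega>} \<le> g k" for k
  proof (cases "k < k1")
    case True
    then show ?thesis
      using rounds.prob_le_1 cover_prob_le_1 by (simp add: g_def add_increasing2)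
  next
    case False
    then have "(1 - ?p) ^ k \<le> \<alpha> powr (1 + \<epsilon>)"
      using \<alpha>(1) by (intro one_minus_cover_prob_power_le) (simp_all add: k1_def not_less nat_le_iff ceiling_le_iff)
    from prob_T_alpha_tail_le[OF this] show ?thesis
      using \<delta> False by (simp add: g_def \<delta>_def)
  qed
  \<comment> \<open>\<open>\<Sum>\<^sub>k k (1 - p)\<^bsup>k-1\<^esup> = 1 / p\<^sup>2\<close> cancels the factor
    \<open>(r choose s)\<^sup>2 / N\<^sup>2 = p\<^sup>2\<close> of the Chebyshev bound.\<close>
  have "(\<lambda>k. real k * (1 - ?p) ^ (k - 1)) sums (1 / ?p\<^sup>2)"
    using geometric_deriv_sums[of "1 - ?p"] sums_Suc_iff[of "\<lambda>k. real k * (1 - ?p) ^ (k - 1)"]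
      cover_prob_pos cover_prob_le_1
    by simp
  then have "g sums (real k1 + 1 / ?p\<^sup>2 * (?C\<^sup>2 / (\<delta> * ?N)\<^sup>2))"
    unfolding g_def using sums_If_finite[of "\<lambda>k. k < k1" "\<lambda>_. 1 :: real"]
    by (intro sums_add sums_mult2) (simp_all add: of_bool_def)
  also have "1 / ?p\<^sup>2 * (?C\<^sup>2 / (\<delta> * ?N)\<^sup>2) = 1 / \<delta>\<^sup>2"
    using s_le_r r_le_n \<delta> by (simp add: cover_prob_def field_simps)
  finally have g_sums: "g sums (real k1 + 1 / \<delta>\<^sup>2)" .
  have "expected_T n r s \<alpha> \<le> (\<Sum>k. ennreal (g k))"
    unfolding expected_T_eq_suminf by (intro suminf_le ennreal_leI tail_le_g) auto
  also have "\<dots> = ennreal (real k1 + 1 / \<delta>\<^sup>2)"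
    using cover_prob_le_1 by (intro suminf_ennreal_eq[OF _ g_sums]) (simp add: g_def)
  also have "real k1 \<le> (1 + \<epsilon>) * main_term n r s \<alpha> + 1"
    using main_term_pos[OF \<alpha>] \<epsilon> of_int_ceiling_le_add_one[of "(1 + \<epsilon>) * main_term n r s \<alpha>"]
    by (simp add: k1_def)
  finally show ?thesis
    by (simp add: \<delta>_def add.assoc ennreal_leI)
qed

lemma sum_prob_T_alpha_tail_le_expected_T:
  assumes \<alpha>: "0 < \<alpha>" "\<alpha> < 1"
  shows "(\<Sum>j<k. rounds.prob n r {\<omega>. enat j < T_alpha n s \<alpha> \<omega>})
    \<le> enn2real (expected_T n r s \<alpha>)"
proof -
  let ?P = "\<lambda>j. rounds.prob n r {\<omega>. enat j < T_alpha n s \<alpha> \<omega>}"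
  have "ennreal (\<Sum>j<k. ?P j) = (\<Sum>j<k. ennreal (?P j))"
    by (simp add: sum_nonneg)
  also have "\<dots> \<le> expected_T n r s \<alpha>"
    unfolding expected_T_eq_suminf by (rule sum_le_suminf) auto
  finally have "ennreal (\<Sum>j<k. ?P j) \<le> expected_T n r s \<alpha>" .
  moreover have "expected_T n r s \<alpha> < \<infinity>"
    using expected_T_le[OF \<alpha>, of 1] by (simp add: order_le_less_trans)
  ultimately show ?thesis
    using enn2real_mono by (fastforce simp: sum_nonneg)
qed

lemma expected_T_ge:
  assumes \<alpha>: "0 < \<alpha>" "\<alpha> < 1" and \<epsilon>: "0 < \<epsilon>" "\<epsilon> < 1"
    and p_le: "cover_prob n r s \<le> \<epsilon> / 4" and k_le: "real k \<le> (1 - \<epsilon>) * main_term n r s \<alpha>"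
  shows "real k * (1 - real k * real (r choose s) ^ 2 / ((\<alpha> powr (1 - \<epsilon> / 2) - \<alpha>) * real (n choose s))\<^sup>2)
    \<le> enn2real (expected_T n r s \<alpha>)"
proof -
  define \<beta> where "\<beta> = \<alpha> powr (1 - \<epsilon> / 2)"
  define K where "K = real (r choose s) ^ 2 / ((\<beta> - \<alpha>) * real (n choose s))\<^sup>2"
  have \<beta>: "\<alpha> < \<beta>"
    using powr_less_mono'[OF \<alpha>, of "1 - \<epsilon> / 2" 1] \<alpha> \<epsilon> by (simp add: \<beta>_def)
  have early: "\<beta> \<le> (1 - cover_prob n r s) ^ j" if "j < k" for j
    unfolding \<beta>_def
  proof (rule one_minus_cover_prob_power_ge[OF \<alpha>(1)])
    show "cover_prob n r s \<le> 1 / 2"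
      using p_le \<epsilon> by simp
    have "real j * (1 + 2 * cover_prob n r s) \<le> ((1 - \<epsilon>) * main_term n r s \<alpha>) * (1 + \<epsilon> / 2)"
      using that k_le p_le cover_prob_pos \<epsilon> by (intro mult_mono) auto
    also have "\<dots> \<le> (1 - \<epsilon> / 2) * main_term n r s \<alpha>"
      using \<epsilon> main_term_pos[OF \<alpha>] by (simp add: algebra_simps mult_left_mono)
    finally show "real j * (1 + 2 * cover_prob n r s) \<le> (1 - \<epsilon> / 2) * main_term n r s \<alpha>" .
  qed
  have tail: "1 - real k * K \<le> rounds.prob n r {\<omega>. enat j < T_alpha n s \<alpha> \<omega>}"
    if "j < k" for j
  proof -
    have "real j * K \<le> real k * K"
      using that by (intro mult_right_mono) (auto simp: K_def)
    then show ?thesis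
      using prob_T_alpha_tail_ge[OF \<beta> early[OF that]] by (simp add: K_def)
  qed
  have "real k * (1 - real k * K) \<le> (\<Sum>j<k. rounds.prob n r {\<omega>. enat j < T_alpha n s \<alpha> \<omega>})"
    using sum_mono[OF tail, of "{..<k}"] by simp
  also have "\<dots> \<le> enn2real (expected_T n r s \<alpha>)"
    by (rule sum_prob_T_alpha_tail_le_expected_T[OF \<alpha>])
  finally show ?thesis
    by (simp add: K_def \<beta>_def)
qed

lemma main_term_le_expected_T:
  assumes \<alpha>: "0 < \<alpha>" "\<alpha> < 1" and \<epsilon>: "0 < \<epsilon>" "\<epsilon> < 1" and L_ge: "2 / \<epsilon> \<le> main_term n r s \<alpha>"
    and p_le: "cover_prob n r s \<le> \<epsilon> / 4"
      "ln (1 / \<alpha>) * cover_prob n r s \<le> \<epsilon> / 2 * (\<alpha> powr (1 - \<epsilon> / 2) - \<alpha>)\<^sup>2"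
  shows "(1 - 2 * \<epsilon>) * main_term n r s \<alpha> \<le> enn2real (expected_T n r s \<alpha>)"
proof -
  define L where "L = main_term n r s \<alpha>"
  define \<delta> where "\<delta> = \<alpha> powr (1 - \<epsilon> / 2) - \<alpha>"
  define k where "k = nat \<lfloor>(1 - \<epsilon>) * L\<rfloor>"
  define K where "K = real (r choose s) ^ 2 / (\<delta> * real (n choose s))\<^sup>2"
  have \<delta>: "0 < \<delta>"
    using powr_less_mono'[OF \<alpha>, of "1 - \<epsilon> / 2" 1] \<alpha> \<epsilon> by (simp add: \<delta>_def)
  have L: "0 < L" "1 \<le> \<epsilon> / 2 * L"
    using main_term_pos[OF \<alpha>] L_ge \<epsilon> by (auto simp: L_def field_simps)
  have k: "real k \<le> (1 - \<epsilon>) * L" "(1 - \<epsilon>) * L - 1 \<le> real k"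
    using L \<epsilon> by (auto simp: k_def)
  have "L * K = ln (1 / \<alpha>) * cover_prob n r s / \<delta>\<^sup>2"
    using s_le_r r_le_n \<delta> by (simp add: L_def K_def main_term_def cover_prob_def field_simps power2_eq_square)
  also have "\<dots> \<le> \<epsilon> / 2"
    using p_le(2) \<delta> by (simp add: \<delta>_def pos_divide_le_eq)
  finally have "L * K \<le> \<epsilon> / 2" .
  moreover have "real k * K \<le> L * K"
    using k(1) \<epsilon> L by (intro mult_right_mono) (auto simp: K_def algebra_simps)
  ultimately have "real k * (1 - \<epsilon> / 2) \<le> real k * (1 - real k * K)"
    by (intro mult_left_mono) auto
  also have "\<dots> \<le> enn2real (expected_T n r s \<alpha>)"
    using expected_T_ge[OF \<alpha> \<epsilon> p_le(1) k(1)[unfolded L_def]] by (simp add: K_def \<delta>_def)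
  finally have lower: "real k * (1 - \<epsilon> / 2) \<le> enn2real (expected_T n r s \<alpha>)" .
  have "1 - 2 * \<epsilon> \<le> (1 - 3 / 2 * \<epsilon>) * (1 - \<epsilon> / 2)"
    by (simp add: algebra_simps)
  then have "(1 - 2 * \<epsilon>) * L \<le> (1 - 3 / 2 * \<epsilon>) * L * (1 - \<epsilon> / 2)"
    using L by (simp add: mult_right_mono mult.commute mult.left_commute)
  also have "\<dots> \<le> ((1 - \<epsilon>) * L - 1) * (1 - \<epsilon> / 2)"
    using L \<epsilon> by (intro mult_right_mono) (auto simp: algebra_simps)
  also have "\<dots> \<le> real k * (1 - \<epsilon> / 2)"
    using k \<epsilon> by (intro mult_right_mono) auto
  finally show ?thesis
    using lower by (simp add: L_def)
qed

end

section \<open>Asymptotics\<close>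

lemma filterlim_binomial_at_top:
  assumes "0 < s"
  shows "filterlim (\<lambda>n. real (n choose s)) at_top sequentially"
proof (rule filterlim_at_top_mono)
  show "filterlim (\<lambda>n. 1 / real s * real n) at_top sequentially"
    using assms by (intro filterlim_tendsto_pos_mult_at_top[OF tendsto_const] filterlim_real_sequentially) auto
  show "eventually (\<lambda>n. 1 / real s * real n \<le> real (n choose s)) sequentially"
    using eventually_ge_at_top[of s]
  proof eventually_elim
    case (elim n)
    then have "1 \<le> real n / real s"
      using assms by simp
    then have "real n / real s \<le> (real n / real s) ^ s"
      using power_increasing[of 1 s "real n / real s"] assms by simp
    also have "\<dots> \<le> real (n choose s)"
      using elim by (rule binomial_ge_n_over_k_pow_k)
    finally show ?case
      by simp
  qed
qed

lemma filterlim_main_term_at_top: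
  assumes "0 < s" "s \<le> r" "0 < \<alpha>" "\<alpha> < 1"
  shows "filterlim (\<lambda>n. main_term n r s \<alpha>) at_top sequentially"
proof -
  have "filterlim (\<lambda>n. ln (1 / \<alpha>) / real (r choose s) * real (n choose s)) at_top sequentially"
    using assms
    by (intro filterlim_tendsto_pos_mult_at_top[OF tendsto_const] filterlim_binomial_at_top) auto
  then show ?thesis
    by (simp add: main_term_def mult.commute)
qed

lemma cover_prob_tendsto_0:
  assumes "0 < s"
  shows "(\<lambda>n. cover_prob n r s) \<longlonglongrightarrow> 0"
  unfolding cover_prob_def
  using assms by (intro tendsto_divide_0[OF tendsto_const] filterlim_at_top_imp_at_infinity filterlim_binomial_at_top)

lemma eventually_expected_T_le:
  assumes s: "0 < s" "s \<le> r" and \<alpha>: "0 < \<alpha>" "\<alpha> < 1" and \<epsilon>: "0 < \<epsilon>"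
  shows "eventually (\<lambda>n. enn2real (expected_T n r s \<alpha>) \<le> (1 + 2 * \<epsilon>) * main_term n r s \<alpha>) sequentially"
proof -
  define c where "c = 1 + 1 / (\<alpha> - \<alpha> powr (1 + \<epsilon>))\<^sup>2"
  have "eventually (\<lambda>n. c / \<epsilon> \<le> main_term n r s \<alpha>) sequentially"
    using filterlim_main_term_at_top[OF s \<alpha>] by (simp add: filterlim_at_top)
  moreover have "eventually (\<lambda>n. r \<le> n) sequentially"
    by (rule eventually_ge_at_top)
  ultimately show ?thesis
  proof eventually_elim
    case (elim n)
    then have "c \<le> \<epsilon> * main_term n r s \<alpha>"
      using \<epsilon> by (simp add: pos_divide_le_eq mult.commute)
    then have "(1 + \<epsilon>) * main_term n r s \<alpha> + c \<le> (1 + 2 * \<epsilon>) * main_term n r s \<alpha>"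
      by (simp add: algebra_simps)
    then have "expected_T n r s \<alpha> \<le> ennreal ((1 + 2 * \<epsilon>) * main_term n r s \<alpha>)"
      using expected_T_le[OF s(2) elim(2) \<alpha> \<epsilon>]
      by (elim order_trans) (simp add: c_def add.assoc ennreal_leI)
    then show ?case
      using main_term_pos[OF s(2) elim(2) \<alpha>] \<epsilon> by (intro enn2real_leI) auto
  qed
qed

lemma eventually_expected_T_ge:
  assumes s: "0 < s" "s \<le> r" and \<alpha>: "0 < \<alpha>" "\<alpha> < 1" and \<epsilon>: "0 < \<epsilon>" "\<epsilon> < 1"
  shows "eventually (\<lambda>n. (1 - 2 * \<epsilon>) * main_term n r s \<alpha> \<le> enn2real (expected_T n r s \<alpha>)) sequentially"
proof -
  define \<delta> where "\<delta> = \<alpha> powr (1 - \<epsilon> / 2) - \<alpha>"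
  have \<delta>: "0 < \<delta>"
    using powr_less_mono'[OF \<alpha>, of "1 - \<epsilon> / 2" 1] \<alpha> \<epsilon> by (simp add: \<delta>_def)
  have "eventually (\<lambda>n. 2 / \<epsilon> \<le> main_term n r s \<alpha>) sequentially"
    using filterlim_main_term_at_top[OF s \<alpha>] by (simp add: filterlim_at_top)
  moreover have "eventually (\<lambda>n. cover_prob n r s < min (\<epsilon> / 4) (\<epsilon> / 2 * \<delta>\<^sup>2 / ln (1 / \<alpha>))) sequentially"
    using \<alpha> \<epsilon> \<delta> by (intro order_tendstoD(2)[OF cover_prob_tendsto_0[OF s(1)]]) simp
  moreover have "eventually (\<lambda>n. r \<le> n) sequentially"
    by (rule eventually_ge_at_top)
  ultimately show ?thesis
  proof eventually_elim
    case (elim n)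
    then have "ln (1 / \<alpha>) * cover_prob n r s \<le> \<epsilon> / 2 * \<delta>\<^sup>2"
      using \<alpha> by (simp add: field_simps)
    with elim show ?case
      using \<alpha> \<epsilon> by (intro main_term_le_expected_T[OF s(2)]) (simp_all add: \<delta>_def)
  qed
qed

theorem theorem2:
  fixes r s :: nat and \<alpha> :: real
  assumes "1 \<le> s" "s \<le> r" "0 < \<alpha>" "\<alpha> < 1"
  shows "(\<lambda>n. enn2real (expected_T n r s \<alpha>) /
              (real (n choose s) * ln (1 / \<alpha>) / real (r choose s)))
         \<longlonglongrightarrow> 1"
  unfolding main_term_def[symmetric]
proof (rule tendstoI)
  fix e :: real
  assume "0 < e"
  define \<epsilon> where "\<epsilon> = min (e / 4) (1 / 4)"
  have \<epsilon>: "0 < \<epsilon>" "\<epsilon> < 1" "2 * \<epsilon> < e"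
    using \<open>0 < e\<close> by (auto simp: \<epsilon>_def)
  have s: "0 < s"
    using assms(1) by simp
  have "eventually (\<lambda>n. r \<le> n) sequentially"
    by (rule eventually_ge_at_top)
  moreover note eventually_expected_T_le[OF s assms(2-4) \<epsilon>(1)]
  moreover note eventually_expected_T_ge[OF s assms(2-4) \<epsilon>(1,2)]
  ultimately show "eventually (\<lambda>n. dist (enn2real (expected_T n r s \<alpha>) / main_term n r s \<alpha>) 1 < e) sequentially"
  proof eventually_elim
    case (elim n)
    then have "\<bar>enn2real (expected_T n r s \<alpha>) / main_term n r s \<alpha> - 1\<bar> \<le> 2 * \<epsilon>"
      using main_term_pos[OF assms(2) elim(1) assms(3,4)] by (simp add: abs_le_iff field_simps)
    then show ?case
      using \<epsilon>(3) by (simp add: dist_real_def)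
  qed
qed

end
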